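(* In the setting below, an element $x\in V$ is invertible in the Jordan algebra $V$ if and only if $h\in[x,\mathfrak g_{-1}(h)]$.
   Context: $\mathfrak g$ is a hermitian simple real Lie algebra, $\theta$ a Cartan involution, $\mathfrak g=\mathfrak k\oplus\mathfrak p$, $h\in\mathfrak p$ an Euler element (non-zero, $\operatorname{ad}h$ diagonalizable with eigenvalues in $\{-1,0,1\}$), $\mathfrak g_\lambda(h)=\ker(\operatorname{ad}h-\lambda)$. Choose $e\in V:=\mathfrak g_1(h)$ with $[e,\theta(e)]=-2h$; then $x*y:=-\tfrac12[[x,\theta(e)],y]$ makes $V$ a euclidean Jordan algebra with unit $e$; invertibility refers to this Jordan algebra. *)

theory Defs
  imports "HOL-Analysis.Analysis"
begin

text \<open>A finite-dimensional real Lie algebra is modelled as a euclidean space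
(any finite-dimensional real vector space, with an auxiliary inner product) together
with a bracket operation br.\<close>

definition lie_algebra :: "('a::euclidean_space \<Rightarrow> 'a \<Rightarrow> 'a) \<Rightarrow> bool" where
  "lie_algebra br \<longleftrightarrow> bilinear br \<and> (\<forall>x. br x x = 0) \<and>
     (\<forall>x y z. br x (br y z) + br y (br z x) + br z (br x y) = 0)"

text \<open>Killing form: trace of ad x o ad y (trace computed in the orthonormal basis Basis).\<close>
definition killing :: "('a::euclidean_space \<Rightarrow> 'a \<Rightarrow> 'a) \<Rightarrow> 'a \<Rightarrow> 'a \<Rightarrow> real" where
  "killing br x y = (\<Sum>b\<in>Basis. br x (br y b) \<bullet> b)"

definition lie_ideal :: "('a::euclidean_space \<Rightarrow> 'a \<Rightarrow> 'a) \<Rightarrow> 'a set \<Rightarrow> bool" where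
  "lie_ideal br I \<longleftrightarrow> subspace I \<and> (\<forall>x y. y \<in> I \<longrightarrow> br x y \<in> I)"

definition simple_lie :: "('a::euclidean_space \<Rightarrow> 'a \<Rightarrow> 'a) \<Rightarrow> bool" where
  "simple_lie br \<longleftrightarrow> lie_algebra br \<and> (\<exists>x y. br x y \<noteq> 0) \<and>
     (\<forall>I. lie_ideal br I \<longrightarrow> I = {0} \<or> I = UNIV)"

definition cartan_involution :: "('a::euclidean_space \<Rightarrow> 'a \<Rightarrow> 'a) \<Rightarrow> ('a \<Rightarrow> 'a) \<Rightarrow> bool" where
  "cartan_involution br \<theta> \<longleftrightarrow> linear \<theta> \<and> (\<forall>x. \<theta> (\<theta> x) = x) \<and>
     (\<forall>x y. \<theta> (br x y) = br (\<theta> x) (\<theta> y)) \<and>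
     (\<forall>x. x \<noteq> 0 \<longrightarrow> killing br x (\<theta> x) < 0)"

definition kpart :: "('a::euclidean_space \<Rightarrow> 'a) \<Rightarrow> 'a set" where
  "kpart \<theta> = {x. \<theta> x = x}"

definition ppart :: "('a::euclidean_space \<Rightarrow> 'a) \<Rightarrow> 'a set" where
  "ppart \<theta> = {x. \<theta> x = - x}"

text \<open>Hermitian: simple, and the maximal compact subalgebra k has non-trivial centre.\<close>
definition hermitian_simple :: "('a::euclidean_space \<Rightarrow> 'a \<Rightarrow> 'a) \<Rightarrow> ('a \<Rightarrow> 'a) \<Rightarrow> bool" where
  "hermitian_simple br \<theta> \<longleftrightarrow> simple_lie br \<and>
     (\<exists>z\<in>kpart \<theta>. z \<noteq> 0 \<and> (\<forall>k\<in>kpart \<theta>. br z k = 0))"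

definition eigsp :: "('a::euclidean_space \<Rightarrow> 'a \<Rightarrow> 'a) \<Rightarrow> 'a \<Rightarrow> real \<Rightarrow> 'a set" where
  "eigsp br h c = {x. br h x = c *\<^sub>R x}"

definition euler_element :: "('a::euclidean_space \<Rightarrow> 'a \<Rightarrow> 'a) \<Rightarrow> 'a \<Rightarrow> bool" where
  "euler_element br h \<longleftrightarrow> h \<noteq> 0 \<and>
     (\<forall>x. \<exists>a b c. x = a + b + c \<and> a \<in> eigsp br h (-1) \<and> b \<in> eigsp br h 0 \<and> c \<in> eigsp br h 1)"

text \<open>Jordan product on V = g_1(h): x*y = -1/2 [[x, theta e], y].\<close>
definition jprod :: "('a::euclidean_space \<Rightarrow> 'a \<Rightarrow> 'a) \<Rightarrow> ('a \<Rightarrow> 'a) \<Rightarrow> 'a \<Rightarrow> 'a \<Rightarrow> 'a \<Rightarrow> 'a" where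
  "jprod br \<theta> e x y = - (1/2) *\<^sub>R br (br x (\<theta> e)) y"

definition jinvertible :: "('a::euclidean_space \<Rightarrow> 'a \<Rightarrow> 'a) \<Rightarrow> ('a \<Rightarrow> 'a) \<Rightarrow> 'a \<Rightarrow> 'a \<Rightarrow> 'a \<Rightarrow> bool" where
  "jinvertible br \<theta> h e x \<longleftrightarrow> (\<exists>y\<in>eigsp br h 1.
     jprod br \<theta> e x y = e \<and> jprod br \<theta> e (jprod br \<theta> e x x) y = x)"

end

theory Submission
  imports Defs
begin

text \<open>With f = -\<theta> e, (h, e, f) is an sl_2-triple adapted to the grading
g_{-1} \<oplus> g_0 \<oplus> g_1, and x * y = [[x, f], y]/2. If [x, z] = h with z in g_{-1},
then y = -[e, [e, z]] is a Jordan inverse of x. Conversely, if y is an inverse of x,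
then z = -[f, [f, y]]/4 satisfies [x, z] = h + w with w in g_0 commuting with x and f.
Using ad x and ad z as raising and lowering operators, ad w satisfies
t + 3t^2 + 2t^3 = 0 on g_1 and t - 3t^2 + 2t^3 = 0 on g_{-1}; transporting the latter
to g_1 by the injective map (ad f)^2, which commutes with ad w, shows that ad w
kills g_1 and then g_{-1}. By simplicity, the elements of g_0 centralising
g_1 \<oplus> g_{-1} form a proper ideal, hence vanish, so w = 0.\<close>

lemma scaleR_3: "3 *\<^sub>R x = x + x + (x::'a::real_vector)"
  using scaleR_left_distrib[of 1 2 x] by (simp add: scaleR_2)

locale lie_bracket =
  fixes br :: "'a::real_vector \<Rightarrow> 'a \<Rightarrow> 'a"
  assumes bilinear_br: "bilinear br"
    and bracket_self: "\<And>x. br x x = 0"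
    and jacobi: "\<And>x y z. br x (br y z) + br y (br z x) + br z (br x y) = 0"
begin

lemmas bracket_linear [simp] =
  bilinear_ladd[OF bilinear_br] bilinear_radd[OF bilinear_br]
  bilinear_lmul[OF bilinear_br] bilinear_rmul[OF bilinear_br]
  bilinear_lneg[OF bilinear_br] bilinear_rneg[OF bilinear_br]
  bilinear_lzero[OF bilinear_br] bilinear_rzero[OF bilinear_br]
  bilinear_lsub[OF bilinear_br] bilinear_rsub[OF bilinear_br]

lemma bracket_antisym: "br a b = - br b a"
proof -
  have "0 = br (a + b) (a + b)" by (rule bracket_self[symmetric])
  also have "\<dots> = br a a + br a b + br b a + br b b" by simp
  also have "\<dots> = br a b + br b a" by (simp add: bracket_self)
  finally have "br a b + br b a = 0" by (rule sym)
  then show ?thesis by (simp add: eq_neg_iff_add_eq_0)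
qed

lemma bracket_leibniz: "br a (br b c) = br (br a b) c + br b (br a c)"
  using jacobi[of a b c] bracket_antisym[of c a] bracket_antisym[of c "br a b"]
  by (simp add: algebra_simps eq_neg_iff_add_eq_0)

end

locale euler_graded = lie_bracket +
  fixes h
  assumes ad_h_cube: "\<And>v. br h (br h (br h v)) = br h v"
begin

lemma eigenvector_zero:
  assumes "br h v = c *\<^sub>R v" and "c \<notin> {-1, 0, 1}"
  shows "v = 0"
proof -
  have "(c * c * c) *\<^sub>R v = c *\<^sub>R v" using ad_h_cube[of v] assms(1) by simp
  then have "(c * (c - 1) * (c + 1)) *\<^sub>R v = 0" by (simp add: algebra_simps)
  with assms(2) show ?thesis by auto
qed

lemma bracket_g1_g1: "br h a = a \<Longrightarrow> br h b = b \<Longrightarrow> br a b = 0"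
  using bracket_leibniz[of h a b] eigenvector_zero[of "br a b" 2] by (simp add: scaleR_2)

lemma bracket_gm1_gm1: "br h a = - a \<Longrightarrow> br h b = - b \<Longrightarrow> br a b = 0"
  using bracket_leibniz[of h a b] eigenvector_zero[of "br a b" "-2"] by (simp add: scaleR_2)

lemma bracket_g1_swap:
  assumes "br h a = a" and "br h c = c"
  shows "br (br a b) c = br (br c b) a"
  using bracket_leibniz[of a b c] bracket_g1_g1[OF assms]
    bracket_antisym[of b c] bracket_antisym[of a "br c b"] by simp

end

locale sl2_graded = euler_graded +
  fixes e f
  assumes h_e: "br h e = e" and h_f: "br h f = - f" and e_f: "br e f = 2 *\<^sub>R h"
begin

lemma f_e: "br f e = - (2 *\<^sub>R h)"
  using bracket_antisym[of f e] e_f by simp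

lemma e_e_f_f:
  assumes a: "br h a = a"
  shows "br e (br e (br f (br f a))) = 4 *\<^sub>R a"
proof -
  have h_fa: "br h (br f a) = 0" using bracket_leibniz[of h f a] a h_f by simp
  have e_fa: "br e (br f a) = 2 *\<^sub>R a"
    using bracket_leibniz[of e f a] e_f a bracket_g1_g1[OF h_e a] by simp
  have "br e (br f (br f a)) = 2 *\<^sub>R br f a"
    using bracket_leibniz[of e f "br f a"] e_f h_fa e_fa by simp
  then show ?thesis using e_fa by simp
qed

lemma f_f_e_e:
  assumes b: "br h b = - b"
  shows "br f (br f (br e (br e b))) = 4 *\<^sub>R b"
proof -
  have h_eb: "br h (br e b) = 0" using bracket_leibniz[of h e b] b h_e by simp
  have f_eb: "br f (br e b) = 2 *\<^sub>R b"
    using bracket_leibniz[of f e b] f_e b bracket_gm1_gm1[OF h_f b] by simp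
  have "br f (br e (br e b)) = 2 *\<^sub>R br e b"
    using bracket_leibniz[of f e "br e b"] f_e h_eb f_eb by simp
  then show ?thesis using f_eb by simp
qed

lemma commute_f_if_commute_e:
  assumes w: "br h w = 0" and w_e: "br w e = 0"
  shows "br w f = 0"
proof -
  have h_wf: "br h (br w f) = - br w f" using bracket_leibniz[of h w f] w h_f by simp
  have "br e (br w f) = 0"
    using bracket_leibniz[of e w f] bracket_antisym[of e w] bracket_antisym[of w h] w_e e_f w
    by simp
  then show ?thesis using f_f_e_e[OF h_wf] by simp
qed

definition jmul :: "'a \<Rightarrow> 'a \<Rightarrow> 'a" where
  "jmul a b = (1/2) *\<^sub>R br (br a f) b"

lemma jordan_inverse_of_preimage:
  assumes x: "br h x = x" and z: "br h z = - z" and x_z: "br x z = h"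
  defines "y \<equiv> - br e (br e z)"
  shows "br h y = y" and "jmul x y = e" and "jmul (jmul x x) y = x"
proof -
  define B where "B = br e z"
  have h_B: "br h B = 0" unfolding B_def using bracket_leibniz[of h e z] h_e z by simp
  show y: "br h y = y"
    unfolding y_def B_def[symmetric] using bracket_leibniz[of h e B] h_B h_e by simp
  have B_f: "br B f = - (2 *\<^sub>R z)"
    using bracket_leibniz[of e z f] bracket_gm1_gm1[OF z h_f] e_f bracket_antisym[of z h] z
    unfolding B_def[symmetric] by (simp add: algebra_simps eq_neg_iff_add_eq_0)
  have y_f: "br y f = 2 *\<^sub>R B"
    using bracket_leibniz[of e B f, symmetric] B_f e_f bracket_antisym[of B h] h_B
    unfolding y_def by (simp add: B_def[symmetric])
  have B_x: "br B x = e" unfolding B_def using bracket_g1_swap[OF h_e x, of z] x_z h_e by simp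
  show "jmul x y = e"
    unfolding jmul_def using bracket_g1_swap[OF x y, of f] y_f B_x by simp
  define s where "s = br (br x f) x"
  have h_s: "br h s = s"
    unfolding s_def using bracket_leibniz[of h "br x f" x] bracket_leibniz[of h x f] x h_f by simp
  have B_xf: "br B (br x f) = 0" using bracket_leibniz[of B x f] B_x B_f e_f x_z by simp
  have x_f_e: "br (br x f) e = 2 *\<^sub>R x" using bracket_g1_swap[OF x h_e, of f] e_f x by simp
  have B_s: "br B s = 2 *\<^sub>R x"
    unfolding s_def using bracket_leibniz[of B "br x f" x] B_xf B_x x_f_e by simp
  show "jmul (jmul x x) y = x"
    unfolding jmul_def s_def[symmetric] using bracket_g1_swap[OF h_s y, of f] y_f B_s by simp
qed

lemma jordan_inverse_brackets:
  assumes x: "br h x = x" and y: "br h y = y"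
    and x_y: "jmul x y = e" and xx_y: "jmul (jmul x x) y = x"
  shows "br x (br f y) = 2 *\<^sub>R e"
    and "br (br (br x f) (br f y)) x = 0"
    and "br (br (br x f) (br f y)) e = 0"
proof -
  define L where "L = br x f"
  define M where "M = br f y"
  define s where "s = br L x"
  have h_s: "br h s = s"
    unfolding s_def L_def using bracket_leibniz[of h "br x f" x] bracket_leibniz[of h x f] x h_f
    by simp
  have L_y: "br L y = 2 *\<^sub>R e"
    using arg_cong[OF x_y, of "scaleR 2"] unfolding jmul_def L_def by simp
  have s_f_y: "br (br s f) y = 4 *\<^sub>R x"
    using arg_cong[OF xx_y, of "scaleR 4"] unfolding jmul_def s_def L_def by simp
  show x_M: "br x (br f y) = 2 *\<^sub>R e"
    using bracket_leibniz[of x f y] L_y bracket_g1_g1[OF x y] L_def by simp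
  have L_e: "br L e = 2 *\<^sub>R x"
    unfolding L_def using bracket_g1_swap[OF x h_e, of f] e_f x by simp
  have M_e: "br M e = - (2 *\<^sub>R y)"
    unfolding M_def using bracket_antisym[of "br f y" e] bracket_leibniz[of e f y]
      e_f y bracket_g1_g1[OF h_e y] by simp
  have M_s: "br M s = - (4 *\<^sub>R x)"
    unfolding M_def using bracket_antisym[of "br f y" s] bracket_leibniz[of s f y]
      s_f_y bracket_g1_g1[OF h_s y] by simp
  show "br (br (br x f) (br f y)) x = 0"
    using bracket_leibniz[of L M x] bracket_antisym[of M x] x_M M_s L_e
    unfolding s_def L_def M_def by simp
  show "br (br (br x f) (br f y)) e = 0"
    using bracket_leibniz[of L M e] bracket_antisym[of M x] M_e L_e L_y x_M
    unfolding L_def M_def by simp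
qed

lemma jordan_inverse_defect:
  assumes x: "br h x = x" and y: "br h y = y"
    and x_y: "jmul x y = e" and xx_y: "jmul (jmul x x) y = x"
  obtains z w where "br h z = - z" and "br h w = 0" and "br x z = h + w"
    and "br w x = 0" and "br w f = 0"
proof -
  define M where "M = br f y"
  define z where "z = - (1/4) *\<^sub>R br f M"
  define w where "w = - (1/4) *\<^sub>R br (br x f) M"
  note brackets = jordan_inverse_brackets[OF assms, folded M_def]
  have h_M: "br h M = 0" unfolding M_def using bracket_leibniz[of h f y] y h_f by simp
  have h_z: "br h z = - z" unfolding z_def using bracket_leibniz[of h f M] h_f h_M by simp
  have h_w: "br h w = 0"
    unfolding w_def using bracket_leibniz[of h "br x f" M] bracket_leibniz[of h x f] x h_f h_M
    by simp
  have "br x z = - (1/4) *\<^sub>R (br (br x f) M - 4 *\<^sub>R h)"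
    unfolding z_def using bracket_leibniz[of x f M] brackets(1) f_e by simp
  also have "\<dots> = h + w" unfolding w_def by (simp add: scaleR_diff_right)
  finally have x_z: "br x z = h + w" .
  have w_x: "br w x = 0" unfolding w_def using brackets(2) by simp
  have "br w e = 0" unfolding w_def using brackets(3) by simp
  with h_w have "br w f = 0" by (rule commute_f_if_commute_e)
  with h_z h_w x_z w_x show ?thesis by (rule that)
qed

context
  fixes x z w
  assumes x: "br h x = x" and z: "br h z = - z" and w: "br h w = 0"
    and x_z: "br x z = h + w" and w_x: "br w x = 0" and w_f: "br w f = 0"
begin

lemma defect_commute_x: "br w (br x c) = br x (br w c)"
  using bracket_leibniz[of w x c] w_x by simp

lemma defect_commute_f: "br w (br f c) = br f (br w c)"
  using bracket_leibniz[of w f c] w_f by simp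

lemma defect_preserves_g1: "br h a = a \<Longrightarrow> br h (br w a) = br w a"
  using bracket_leibniz[of h w a] w by simp

lemma defect_preserves_gm1: "br h v = - v \<Longrightarrow> br h (br w v) = - br w v"
  using bracket_leibniz[of h w v] w by simp

lemma z_x_gm1:
  assumes v: "br h v = - v"
  shows "br z (br x v) = v - br w v"
  using bracket_leibniz[of z x v] bracket_antisym[of z x] x_z v bracket_gm1_gm1[OF z v] by simp

lemma x_z_g1:
  assumes a: "br h a = a"
  shows "br x (br z a) = a + br w a"
  using bracket_leibniz[of x z a] x_z a bracket_g1_g1[OF x a] by simp

lemma z_x_x_gm1:
  assumes v: "br h v = - v"
  shows "br z (br x (br x v)) = br x v - 2 *\<^sub>R br x (br w v)"
proof -
  have h_xv: "br h (br x v) = 0" using bracket_leibniz[of h x v] x v by simp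
  have "br z (br x (br x v)) = - br (h + w) (br x v) + br x (v - br w v)"
    using bracket_leibniz[of z x "br x v"] bracket_antisym[of z x] x_z z_x_gm1[OF v] by simp
  then show ?thesis using h_xv defect_commute_x by (simp add: scaleR_2)
qed

lemma x_x_defect_gm1:
  assumes v: "br h v = - v"
  shows "br x (br x (br w v)) = 0"
proof -
  define c where "c = br x (br x v)"
  have h_c: "br h c = c"
    unfolding c_def using bracket_leibniz[of h x "br x v"] bracket_leibniz[of h x v] x v by simp
  have "0 = br z (br x c)" using bracket_g1_g1[OF x h_c] by simp
  also have "\<dots> = - br (h + w) c + br x (br z c)"
    using bracket_leibniz[of z x c] bracket_antisym[of z x] x_z by simp
  also have "\<dots> = - (3 *\<^sub>R br x (br x (br w v)))"
    using h_c unfolding c_def z_x_x_gm1[OF v]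
    by (simp add: defect_commute_x algebra_simps scaleR_2 scaleR_3)
  finally show ?thesis by simp
qed

lemma z_z_x_x_gm1:
  assumes v: "br h v = - v"
  shows "br z (br z (br x (br x v))) = v - 3 *\<^sub>R br w v + 2 *\<^sub>R br w (br w v)"
proof -
  have "br z (br z (br x (br x v))) = br z (br x v) - 2 *\<^sub>R br z (br x (br w v))"
    using z_x_x_gm1[OF v] by simp
  also have "\<dots> = (v - br w v) - 2 *\<^sub>R (br w v - br w (br w v))"
    using z_x_gm1[OF v] z_x_gm1[OF defect_preserves_gm1[OF v]] by simp
  finally show ?thesis by (simp add: algebra_simps scaleR_2 scaleR_3)
qed

lemma x_x_z_z_g1:
  assumes a: "br h a = a"
  shows "br x (br x (br z (br z a))) = a + 3 *\<^sub>R br w a + 2 *\<^sub>R br w (br w a)"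
proof -
  define d where "d = br z a"
  have h_d: "br h d = 0" unfolding d_def using bracket_leibniz[of h z a] z a by simp
  have x_d: "br x d = a + br w a" unfolding d_def using x_z_g1[OF a] .
  have "br x (br z d) = br w d + d + br z (br w a)"
    using bracket_leibniz[of x z d] x_z h_d x_d d_def by simp
  then have "br x (br x (br z d)) = br w (br x d) + br x d + br x (br z (br w a))"
    using defect_commute_x by simp
  also have "\<dots> = br w (a + br w a) + (a + br w a) + (br w a + br w (br w a))"
    using x_d x_z_g1[OF defect_preserves_g1[OF a]] by simp
  finally show ?thesis unfolding d_def by (simp add: algebra_simps scaleR_2 scaleR_3)
qed

lemma defect_cubic_plus_g1:
  assumes a: "br h a = a"
  shows "br w a + 3 *\<^sub>R br w (br w a) + 2 *\<^sub>R br w (br w (br w a)) = 0"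
proof -
  have "br h (br z (br z a)) = - br z (br z a)"
    using bracket_leibniz[of h z "br z a"] bracket_leibniz[of h z a] z a by simp
  then have "br x (br x (br w (br z (br z a)))) = 0" by (rule x_x_defect_gm1)
  then have "br w (br x (br x (br z (br z a)))) = 0" using defect_commute_x by simp
  then show ?thesis using x_x_z_z_g1[OF a] by simp
qed

lemma defect_cubic_minus_gm1:
  assumes v: "br h v = - v"
  shows "br w v - 3 *\<^sub>R br w (br w v) + 2 *\<^sub>R br w (br w (br w v)) = 0"
  using z_z_x_x_gm1[OF defect_preserves_gm1[OF v]] x_x_defect_gm1[OF v] by simp

lemma defect_cubic_minus_g1:
  assumes a: "br h a = a"
  shows "br w a - 3 *\<^sub>R br w (br w a) + 2 *\<^sub>R br w (br w (br w a)) = 0"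
proof -
  define q where "q = br w a - 3 *\<^sub>R br w (br w a) + 2 *\<^sub>R br w (br w (br w a))"
  have h_q: "br h q = q"
    unfolding q_def using defect_preserves_g1 a by simp
  have h_ffa: "br h (br f (br f a)) = - br f (br f a)"
    using bracket_leibniz[of h f "br f a"] bracket_leibniz[of h f a] h_f a by simp
  have "br f (br f q) = 0"
    unfolding q_def using defect_cubic_minus_gm1[OF h_ffa] by (simp add: defect_commute_f)
  then show ?thesis using e_e_f_f[OF h_q] unfolding q_def by simp
qed

lemma defect_kills_g1:
  assumes a: "br h a = a"
  shows "br w a = 0"
proof -
  let ?p = "br w a + 3 *\<^sub>R br w (br w a) + 2 *\<^sub>R br w (br w (br w a))"
  let ?m = "br w a - 3 *\<^sub>R br w (br w a) + 2 *\<^sub>R br w (br w (br w a))"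
  have "(3 + 3) *\<^sub>R br w (br w a) = ?p - ?m"
    by (simp only: scaleR_left_distrib) (simp add: algebra_simps)
  also have "\<dots> = 0" using defect_cubic_plus_g1[OF a] defect_cubic_minus_g1[OF a] by simp
  finally have "br w (br w a) = 0" by simp
  then show ?thesis using defect_cubic_plus_g1[OF a] by simp
qed

lemma defect_kills_gm1:
  assumes b: "br h b = - b"
  shows "br w b = 0"
proof -
  have "br h (br e (br e b)) = br e (br e b)"
    using bracket_leibniz[of h e "br e b"] bracket_leibniz[of h e b] h_e b by simp
  then have "br w (br e (br e b)) = 0" by (rule defect_kills_g1)
  then have "br w (br f (br f (br e (br e b)))) = 0" by (simp add: defect_commute_f)
  then show ?thesis using f_f_e_e[OF b] by simp
qed

end

end

definition g0_centralizer :: "('a::real_vector \<Rightarrow> 'a \<Rightarrow> 'a) \<Rightarrow> 'a \<Rightarrow> 'a set" where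
  "g0_centralizer br h = {w. br h w = 0 \<and>
     (\<forall>a. br h a = a \<longrightarrow> br w a = 0) \<and> (\<forall>b. br h b = - b \<longrightarrow> br w b = 0)}"

locale faithful_sl2_graded = sl2_graded +
  assumes g0_centralizer_trivial: "g0_centralizer br h = {0}"
begin

lemma preimage_of_jordan_inverse:
  assumes x: "br h x = x" and y: "br h y = y" and "jmul x y = e" and "jmul (jmul x x) y = x"
  shows "\<exists>z. br h z = - z \<and> br x z = h"
proof -
  obtain z w where z: "br h z = - z" and w: "br h w = 0" and x_z: "br x z = h + w"
    and w_x: "br w x = 0" and w_f: "br w f = 0"
    using jordan_inverse_defect[OF x y assms(3,4)] .
  have "w \<in> g0_centralizer br h"
    unfolding g0_centralizer_def
    using w defect_kills_g1[OF x z w x_z w_x w_f] defect_kills_gm1[OF x z w x_z w_x w_f] by blast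
  then have "w = 0" using g0_centralizer_trivial by simp
  with z x_z show ?thesis by auto
qed

lemma jordan_invertible_iff_preimage:
  assumes x: "br h x = x"
  shows "(\<exists>y. br h y = y \<and> jmul x y = e \<and> jmul (jmul x x) y = x) \<longleftrightarrow>
    (\<exists>z. br h z = - z \<and> br x z = h)"
  using preimage_of_jordan_inverse[OF x] jordan_inverse_of_preimage[OF x] by blast

end

lemma simple_lie_imp_lie_bracket: "simple_lie br \<Longrightarrow> lie_bracket br"
  unfolding simple_lie_def lie_algebra_def lie_bracket_def by blast

lemma euler_element_decompose:
  "euler_element br h \<Longrightarrow>
    \<exists>a b c. v = a + b + c \<and> br h a = - a \<and> br h b = 0 \<and> br h c = c"
  unfolding euler_element_def eigsp_def by simp

lemma euler_element_ad_cube: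
  assumes "lie_bracket br" and "euler_element br h"
  shows "br h (br h (br h v)) = br h v"
proof -
  interpret lie_bracket br by fact
  obtain a b c where "v = a + b + c" "br h a = - a" "br h b = 0" "br h c = c"
    using euler_element_decompose[OF assms(2)] by blast
  then show ?thesis by simp
qed

lemma g0_centralizer_lie_ideal:
  fixes br :: "'a::euclidean_space \<Rightarrow> 'a \<Rightarrow> 'a"
  assumes "lie_bracket br" and euler: "euler_element br h"
  shows "lie_ideal br (g0_centralizer br h)"
proof -
  interpret lie_bracket br by fact
  have "br u y \<in> g0_centralizer br h" if "y \<in> g0_centralizer br h" for u y
  proof -
    obtain a b c where u: "u = a + b + c"
      and a: "br h a = - a" and b: "br h b = 0" and c: "br h c = c"
      using euler_element_decompose[OF euler] by blast
    from that have h_y: "br h y = 0" and y_g1: "\<And>a. br h a = a \<Longrightarrow> br y a = 0"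
      and y_gm1: "\<And>a. br h a = - a \<Longrightarrow> br y a = 0"
      unfolding g0_centralizer_def by auto
    have "br u y = br b y"
      using u bracket_antisym[of a y] bracket_antisym[of c y] y_gm1[OF a] y_g1[OF c] by simp
    moreover have "br h (br b y) = 0" using bracket_leibniz[of h b y] b h_y by simp
    moreover have "br (br b y) a' = 0" if "br h a' = a'" for a'
      using bracket_leibniz[of b y a'] bracket_leibniz[of h b a'] b that y_g1 by simp
    moreover have "br (br b y) a' = 0" if "br h a' = - a'" for a'
      using bracket_leibniz[of b y a'] bracket_leibniz[of h b a'] b that y_gm1 by simp
    ultimately show ?thesis unfolding g0_centralizer_def by simp
  qed
  moreover have "subspace (g0_centralizer br h)"
    unfolding subspace_def g0_centralizer_def by simp
  ultimately show ?thesis unfolding lie_ideal_def by blast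
qed

lemma simple_g0_centralizer_trivial:
  fixes br :: "'a::euclidean_space \<Rightarrow> 'a \<Rightarrow> 'a"
  assumes simple: "simple_lie br" and "euler_element br h" and "br h e = e" and "e \<noteq> 0"
  shows "g0_centralizer br h = {0}"
proof -
  have "lie_bracket br" using simple by (rule simple_lie_imp_lie_bracket)
  then have "lie_ideal br (g0_centralizer br h)"
    using assms(2) by (rule g0_centralizer_lie_ideal)
  then have "g0_centralizer br h = {0} \<or> g0_centralizer br h = UNIV"
    using simple unfolding simple_lie_def by blast
  moreover have "e \<notin> g0_centralizer br h"
    using assms(3,4) unfolding g0_centralizer_def by auto
  ultimately show ?thesis by blast
qed

lemma cartan_involution_negates_eigenvalue:
  assumes "lie_bracket br" and "cartan_involution br \<theta>" and "\<theta> h = - h"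
    and "br h a = c *\<^sub>R a"
  shows "br h (\<theta> a) = - c *\<^sub>R \<theta> a"
proof -
  interpret lie_bracket br by fact
  have "linear \<theta>" and "\<theta> (br h a) = br (\<theta> h) (\<theta> a)"
    using assms(2) unfolding cartan_involution_def by blast+
  then have "c *\<^sub>R \<theta> a = - br h (\<theta> a)" using assms(3,4) by (simp add: linear_scale)
  then show ?thesis by simp
qed

theorem lemma5p5:
  fixes br :: "'a::euclidean_space \<Rightarrow> 'a \<Rightarrow> 'a" and \<theta> :: "'a \<Rightarrow> 'a" and h e x :: 'a
  assumes "hermitian_simple br \<theta>"
    and "cartan_involution br \<theta>"
    and "h \<in> ppart \<theta>"
    and "euler_element br h"
    and "e \<in> eigsp br h 1"
    and "br e (\<theta> e) = - 2 *\<^sub>R h"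
    and "x \<in> eigsp br h 1"
  shows "jinvertible br \<theta> h e x \<longleftrightarrow> h \<in> br x ` eigsp br h (-1)"
proof -
  have simple: "simple_lie br" using assms(1) unfolding hermitian_simple_def by blast
  then have lie: "lie_bracket br" by (rule simple_lie_imp_lie_bracket)
  interpret lie_bracket br by (rule lie)
  have h_e: "br h e = e" using assms(5) unfolding eigsp_def by simp
  have "e \<noteq> 0" using assms(4,6) unfolding euler_element_def by auto
  define f where "f = - \<theta> e"
  have "\<theta> h = - h" using assms(3) unfolding ppart_def by simp
  then have h_f: "br h f = - f"
    unfolding f_def using cartan_involution_negates_eigenvalue[OF lie assms(2), of h e 1] h_e
    by simp
  interpret faithful_sl2_graded br h e f
    by unfold_locales
      (use lie euler_element_ad_cube[OF lie assms(4)] h_e h_f assms(6)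
        simple_g0_centralizer_trivial[OF simple assms(4) h_e \<open>e \<noteq> 0\<close>] in
        \<open>auto simp: lie_bracket_def f_def\<close>)
  have "jprod br \<theta> e = jmul" unfolding jmul_def jprod_def by (simp add: fun_eq_iff f_def)
  moreover have "br h x = x" using assms(7) unfolding eigsp_def by simp
  ultimately show ?thesis
    unfolding jinvertible_def eigsp_def image_def using jordan_invertible_iff_preimage by auto
qed

end
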